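(* Let $r\in\mathbb{N}$ and let $p\in(\frac{1}{r+1},\frac1r]$ be fixed. Let $(H_n)_{n\in\mathbb{N}}$ be a sequence of weakly $q$-pseudorandom graphs on $n$ vertices with $q=q(n)\gg\log(n)/n$. Then the following hold for $H=H_n$: (i) For every $\mu\in\mathcal{M}_{1,p}(H)$, with probability $1-o(1)$ we have $|C_1(\mathbf{H}_\mu)|\geq(1-o(1))\frac{1+\sqrt{\frac{(r+1)p-1}{r}}}{r+1}\,n$. (ii) There exists $\mu\in\mathcal{M}_{1,p}(H)$ such that with probability $1-o(1)$ the random graph $\mathbf{H}_\mu$ satisfies $|C_1(\mathbf{H}_\mu)|\leq(1+o(1))\frac{1+\sqrt{\frac{(r+1)p-1}{r}}}{r+1}\,n$.
   Context: A sequence $(H_n)$ of $n$-vertex graphs is weakly $q$-pseudorandom if $\max\{|e(H_n[U])-q|U|^2/2|:\ U\subseteq V(H_n)\}=o(qn^2)$. A random graph model on $H$ is a probability measure $\mu$ on subsets of $E(H)$, and $\mathbf{H}_\mu$ is the random spanning subgraph of $H$ with edge set distributed according to $\mu$. $\mu$ is $1$-independent if for all sets $A,B\subseteq E(H)$ whose edges span disjoint vertex sets, $E(\mathbf{H}_\mu)\cap A$ and $E(\mathbf{H}_\mu)\cap B$ are independent. $\mathcal{M}_{1,p}(H)$ is the set of $1$-independent measures on $H$ in which each edge is present with probability exactly $p$. $C_1(\mathbf{H}_\mu)$ denotes a largest connected component of $\mathbf{H}_\mu$. Asymptotics are as $n\to\infty$. *)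

theory Defs
  imports "HOL-Probability.Probability" "HOL-Library.Landau_Symbols"
begin

definition simple_graph_on :: "nat \<Rightarrow> nat set set \<Rightarrow> bool" where
  "simple_graph_on n E \<longleftrightarrow> (\<forall>e\<in>E. e \<subseteq> {..<n} \<and> card e = 2)"

definition induced_edges :: "nat set set \<Rightarrow> nat set \<Rightarrow> nat" where
  "induced_edges H U = card {e\<in>H. e \<subseteq> U}"

definition discrepancy :: "nat \<Rightarrow> nat set set \<Rightarrow> real \<Rightarrow> real" where
  "discrepancy n H q = Max {\<bar>real (induced_edges H U) - q * real (card U)^2 / 2\<bar> | U. U \<subseteq> {..<n}}"

definition weakly_pseudorandom :: "(nat \<Rightarrow> nat set set) \<Rightarrow> (nat \<Rightarrow> real) \<Rightarrow> bool" where
  "weakly_pseudorandom H q \<longleftrightarrow>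
     (\<forall>n. simple_graph_on n (H n)) \<and>
     (\<lambda>n. discrepancy n (H n) (q n)) \<in> o(\<lambda>n. q n * real n ^ 2)"

definition one_independent :: "nat set set \<Rightarrow> nat set set pmf \<Rightarrow> bool" where
  "one_independent H \<mu> \<longleftrightarrow>
     (\<forall>A B S T. A \<subseteq> H \<longrightarrow> B \<subseteq> H \<longrightarrow> \<Union>A \<inter> \<Union>B = {} \<longrightarrow>
        measure_pmf.prob \<mu> {X. X \<inter> A = S \<and> X \<inter> B = T}
        = measure_pmf.prob \<mu> {X. X \<inter> A = S} * measure_pmf.prob \<mu> {X. X \<inter> B = T})"

definition M1p :: "nat set set \<Rightarrow> real \<Rightarrow> nat set set pmf set" where
  "M1p H p = {\<mu>. set_pmf \<mu> \<subseteq> Pow H \<and> one_independent H \<mu> \<and>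
                  (\<forall>e\<in>H. measure_pmf.prob \<mu> {X. e \<in> X} = p)}"

definition component :: "nat \<Rightarrow> nat set set \<Rightarrow> nat \<Rightarrow> nat set" where
  "component n X v = {u. u < n \<and> (\<lambda>a b. {a, b} \<in> X)\<^sup>*\<^sup>* v u}"

definition largest_component_size :: "nat \<Rightarrow> nat set set \<Rightarrow> nat" where
  "largest_component_size n X = Max ((\<lambda>v. card (component n X v)) ` {..<n})"

end

theory Submission
  imports Defs "HOL-Real_Asymp.Real_Asymp"
begin

(*
  Lower bound. Let c' < c. If every component of X has at most c'n vertices, the components
  can be grouped into O(1/c') vertex sets of at most c'n vertices each. Pseudorandomness bounds
  the number of edges inside a group G by q|G|^2/2 + o(qn^2), and the sum of |G|^2 subject to
  |G| <= c'n and sum |G| = n is at most r(c'n)^2 + (n - rc'n)^2. Hence X has at most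
  (r c'^2 + (1 - rc')^2) qn^2/2 + o(qn^2) edges, a constant fraction fewer than the mean
  p e(H) ~ p qn^2/2, because r y^2 + (1 - ry)^2 is increasing in y and equals p at y = c.
  In a 1-independent model only pairs of edges sharing a vertex are correlated, so the number
  of edges has variance at most 2n e(H), and Chebyshev's inequality bounds the probability of
  such a deviation by O(1/(qn)) = O(1/ln n).

  Upper bound. Colour the vertices independently, r colours with probability c each and one
  colour with probability 1 - rc, and keep the monochromatic edges of H. This model is
  1-independent, every edge survives with probability r c^2 + (1 - rc)^2 = p, and every
  component lies inside a colour class, which has at most (1 + eps)cn vertices with high
  probability, again by Chebyshev's inequality.
*)

section \<open>Sums of squares and coarsenings of partitions\<close>

lemma sum_squares_le_if_bounded:
  fixes b :: "'i \<Rightarrow> real"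
  assumes "finite I" and "\<And>i. i \<in> I \<Longrightarrow> 0 \<le> b i \<and> b i \<le> x"
    and "real r * x \<le> sum b I" and "sum b I \<le> (real r + 1) * x"
  shows "(\<Sum>i\<in>I. (b i)^2) \<le> real r * x^2 + (sum b I - real r * x)^2"
  using assms
proof (induction I arbitrary: r rule: finite_induct)
  case empty
  then show ?case by simp
next
  case (insert i I)
  have bi: "0 \<le> b i" "b i \<le> x" and nn: "0 \<le> sum b I"
    using insert.prems(1) by (auto intro: sum_nonneg)
  have S: "sum b (insert i I) = b i + sum b I"
    and SQ: "(\<Sum>i\<in>insert i I. (b i)^2) = (b i)^2 + (\<Sum>i\<in>I. (b i)^2)"
    using insert.hyps by simp_all
  show ?case
  proof (cases "real r * x \<le> sum b I")
    case True
    have "sum b I \<le> (real r + 1) * x" using insert.prems(3) bi S by linarith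
    then have "(\<Sum>i\<in>I. (b i)^2) \<le> real r * x^2 + (sum b I - real r * x)^2"
      using insert.IH insert.prems(1) True by simp
    moreover have "(sum b I - real r * x) * b i \<ge> 0" using True bi by simp
    ultimately show ?thesis unfolding SQ S by (simp add: power2_eq_square algebra_simps)
  next
    case False
    then obtain r' where r': "r = Suc r'" using nn by (cases r) auto
    define \<alpha> where "\<alpha> = sum b I - real r' * x"
    have "real r' * x \<le> sum b I" "sum b I \<le> (real r' + 1) * x"
      using insert.prems(2) False bi S unfolding r' by (simp_all add: algebra_simps)
    then have IH: "(\<Sum>i\<in>I. (b i)^2) \<le> real r' * x^2 + \<alpha>^2"
      unfolding \<alpha>_def using insert.IH insert.prems(1) by simp
    have "\<alpha> \<le> x" using False unfolding r' \<alpha>_def by (simp add: algebra_simps)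
    then have "(x - \<alpha>) * (x - b i) \<ge> 0" using bi by simp
    then have merge: "\<alpha>^2 + (b i)^2 \<le> x^2 + (\<alpha> + b i - x)^2"
      by (simp add: power2_eq_square algebra_simps)
    have E: "sum b (insert i I) - real r * x = \<alpha> + b i - x"
      unfolding S \<alpha>_def r' by (simp add: algebra_simps)
    have R: "real r * x^2 = real r' * x^2 + x^2"
      unfolding r' by (simp add: distrib_right)
    show ?thesis unfolding SQ E R using IH merge by linarith
  qed
qed

definition coarsening :: "real \<Rightarrow> 'a set set \<Rightarrow> 'a set set \<Rightarrow> bool" where
  "coarsening x \<C> \<G> \<longleftrightarrow> finite \<G> \<and> pairwise disjnt \<G> \<and> \<Union>\<G> = \<Union>\<C> \<and>
     (\<forall>G\<in>\<G>. finite G \<and> real (card G) \<le> x) \<and> (\<forall>C\<in>\<C>. \<exists>G\<in>\<G>. C \<subseteq> G)"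

lemma coarsening_merge_parts:
  fixes x :: real
  assumes \<G>: "coarsening x \<C> \<G>" and G12: "G1 \<in> \<G>" "G2 \<in> \<G>" "G1 \<noteq> G2"
    and small: "card G1 + card G2 \<le> x"
  defines "\<G>' \<equiv> insert (G1 \<union> G2) (\<G> - {G1, G2})"
  shows "coarsening x \<C> \<G>'" and "card \<G>' < card \<G>"
proof -
  have fin: "finite \<G>" and pw: "pairwise disjnt \<G>" and U: "\<Union>\<G> = \<Union>\<C>"
    and parts: "\<forall>G\<in>\<G>. finite G \<and> card G \<le> x" and cover: "\<forall>C\<in>\<C>. \<exists>G\<in>\<G>. C \<subseteq> G"
    using \<G> unfolding coarsening_def by blast+
  have "disjnt (G1 \<union> G2) Y" if "Y \<in> \<G> - {G1, G2}" for Y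
  proof -
    have "disjnt G1 Y" "disjnt G2 Y" using pairwiseD[OF pw] G12 that by auto
    then show ?thesis by (simp add: disjnt_Un1)
  qed
  then have "pairwise disjnt \<G>'"
    unfolding \<G>'_def pairwise_insert using pairwise_subset[OF pw, of "\<G> - {G1, G2}"]
    by (auto simp: disjnt_sym)
  moreover have "\<Union>\<G>' = \<Union>\<C>" using G12 U unfolding \<G>'_def by auto
  moreover have "card (G1 \<union> G2) \<le> card G1 + card G2" by (rule card_Un_le)
  then have "\<forall>G\<in>\<G>'. finite G \<and> card G \<le> x"
    using parts G12 small unfolding \<G>'_def by (auto intro: order_trans[OF of_nat_mono])
  moreover have "\<forall>C\<in>\<C>. \<exists>G\<in>\<G>'. C \<subseteq> G"
  proof
    fix C assume "C \<in> \<C>"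
    then obtain G where "G \<in> \<G>" "C \<subseteq> G" using cover by blast
    then show "\<exists>G\<in>\<G>'. C \<subseteq> G" unfolding \<G>'_def by (cases "G \<in> {G1, G2}") auto
  qed
  ultimately show "coarsening x \<C> \<G>'" using fin unfolding coarsening_def \<G>'_def by simp
  have "card (\<G> - {G1, G2}) = card \<G> - 2" using G12 fin by (simp add: card_Diff_subset)
  moreover have "card {G1, G2} \<le> card \<G>" using G12 fin by (intro card_mono) auto
  moreover have "card \<G>' \<le> Suc (card (\<G> - {G1, G2}))"
    unfolding \<G>'_def using fin by (simp add: card_insert_if)
  ultimately show "card \<G>' < card \<G>" using G12(3) by simp
qed

lemma exists_coarsening_one_small_part:
  fixes x :: real
  assumes "finite \<C>" and "pairwise disjnt \<C>" and "\<And>C. C \<in> \<C> \<Longrightarrow> finite C \<and> card C \<le> x"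
  obtains \<G> where "coarsening x \<C> \<G>" and "card {G\<in>\<G>. card G \<le> x / 2} \<le> 1"
proof -
  have "coarsening x \<C> \<C>" using assms unfolding coarsening_def by auto
  then obtain \<G> where \<G>: "coarsening x \<C> \<G>"
    and min: "\<forall>\<G>'. coarsening x \<C> \<G>' \<longrightarrow> card \<G> \<le> card \<G>'"
    using ex_has_least_nat[of "coarsening x \<C>" _ card] by blast
  let ?S = "{G\<in>\<G>. card G \<le> x / 2}"
  have "card ?S \<le> 1"
  proof (rule ccontr)
    assume "\<not> card ?S \<le> 1"
    moreover have "finite ?S" using \<G> unfolding coarsening_def by simp
    ultimately obtain G1 G2 where "G1 \<in> ?S" "G2 \<in> ?S" "G1 \<noteq> G2"
      using card_le_Suc0_iff_eq[of ?S] by auto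
    then have "G1 \<in> \<G>" "G2 \<in> \<G>" "G1 \<noteq> G2" "card G1 + card G2 \<le> x" by auto
    then show False using coarsening_merge_parts[OF \<G>] min by (meson not_le)
  qed
  then show ?thesis using that \<G> by blast
qed

lemma card_parts_le_if_one_small_part:
  fixes x :: real
  assumes "finite \<G>" and "pairwise disjnt \<G>" and "\<And>G. G \<in> \<G> \<Longrightarrow> finite G" and "x > 0"
    and "card {G\<in>\<G>. card G \<le> x / 2} \<le> 1"
  shows "card \<G> \<le> 2 * card (\<Union>\<G>) / x + 1"
proof -
  let ?S = "{G\<in>\<G>. card G \<le> x / 2}" and ?B = "{G\<in>\<G>. \<not> card G \<le> x / 2}"
  have "card \<G> = card ?S + card ?B"
    using assms(1) by (subst card_Un_disjoint[symmetric]) (auto intro: arg_cong[where f=card])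
  moreover have "card ?B * (x / 2) \<le> card (\<Union>\<G>)"
  proof -
    have "card ?B * (x / 2) = (\<Sum>G\<in>?B. x / 2)" by simp
    also have "\<dots> \<le> (\<Sum>G\<in>?B. real (card G))" by (intro sum_mono) auto
    also have "\<dots> \<le> (\<Sum>G\<in>\<G>. real (card G))" using assms(1) by (intro sum_mono2) auto
    also have "\<dots> = card (\<Union>\<G>)" using assms(2,3) by (simp add: card_Union_disjoint)
    finally show ?thesis .
  qed
  then have "card ?B \<le> 2 * card (\<Union>\<G>) / x" using assms(4) by (simp add: field_simps)
  ultimately show ?thesis using assms(5) by linarith
qed

section \<open>Components, edge counts and discrepancy\<close>

lemma equivp_reachable: "equivp (\<lambda>a b. {a, b} \<in> X)\<^sup>*\<^sup>*"
  by (rule equivp_rtranclp) (auto intro: sympI simp: insert_commute)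

lemma component_subset: "component n X v \<subseteq> {..<n}"
  unfolding component_def by auto

lemma in_component_self: "v < n \<Longrightarrow> v \<in> component n X v"
  unfolding component_def by auto

lemma edge_in_component: "{a, b} \<in> X \<Longrightarrow> b < n \<Longrightarrow> b \<in> component n X a"
  unfolding component_def by auto

lemma component_eqI:
  assumes "u \<in> component n X v" and "u \<in> component n X w"
  shows "component n X v = component n X w"
proof -
  let ?R = "(\<lambda>a b. {a, b} \<in> X)\<^sup>*\<^sup>*"
  have "?R v u" "?R w u" using assms unfolding component_def by auto
  moreover have "?R a b \<Longrightarrow> ?R b a" for a b by (rule equivp_symp[OF equivp_reachable])
  ultimately have "?R v z \<longleftrightarrow> ?R w z" for z by (meson rtranclp_trans)
  then show ?thesis unfolding component_def by auto
qed

lemma disjoint_components: "pairwise disjnt (component n X ` {..<n})"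
  by (rule pairwiseI) (auto simp: disjnt_def dest: component_eqI)

lemma Union_components: "\<Union>(component n X ` {..<n}) = {..<n}"
  using component_subset in_component_self by fastforce

lemma card_component_le_largest: "v < n \<Longrightarrow> card (component n X v) \<le> largest_component_size n X"
  unfolding largest_component_size_def by (intro Max_ge) auto

lemma simple_graph_on_finite: "simple_graph_on n Hn \<Longrightarrow> finite Hn"
  unfolding simple_graph_on_def by (rule finite_subset[of _ "Pow {..<n}"]) auto

lemma simple_graph_on_edgeE:
  assumes "simple_graph_on n Hn" and "e \<in> Hn"
  obtains u v where "e = {u, v}" "u \<noteq> v" "u < n" "v < n"
  using assms unfolding simple_graph_on_def by (auto simp: card_2_iff)

lemma card_edges_containing_le:
  assumes sg: "simple_graph_on n Hn"
  shows "card {e\<in>Hn. a \<in> e} \<le> n"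
proof -
  have "{e\<in>Hn. a \<in> e} \<subseteq> (\<lambda>w. {a, w}) ` {..<n}"
  proof
    fix e assume e: "e \<in> {e\<in>Hn. a \<in> e}"
    then obtain u v where "e = {u, v}" "u < n" "v < n" using simple_graph_on_edgeE[OF sg] by blast
    then show "e \<in> (\<lambda>w. {a, w}) ` {..<n}" using e by (auto simp: insert_commute)
  qed
  then have "card {e\<in>Hn. a \<in> e} \<le> card ((\<lambda>w. {a, w}) ` {..<n})" by (intro card_mono) auto
  also have "\<dots> \<le> n" using card_image_le[of "{..<n}" "\<lambda>w. {a, w}"] by simp
  finally show ?thesis .
qed

lemma card_intersecting_edge_pairs_le:
  assumes sg: "simple_graph_on n Hn"
  shows "card ({(e, f). e \<inter> f \<noteq> {}} \<inter> Hn \<times> Hn) \<le> 2 * n * card Hn"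
proof -
  have "{(e, f). e \<inter> f \<noteq> {}} \<inter> Hn \<times> Hn = Sigma Hn (\<lambda>e. {f\<in>Hn. e \<inter> f \<noteq> {}})" by auto
  then have "card ({(e, f). e \<inter> f \<noteq> {}} \<inter> Hn \<times> Hn) = (\<Sum>e\<in>Hn. card {f\<in>Hn. e \<inter> f \<noteq> {}})"
    using simple_graph_on_finite[OF sg] by (simp add: card_SigmaI)
  also have "\<dots> \<le> (\<Sum>e\<in>Hn. 2 * n)"
  proof (intro sum_mono)
    fix e assume "e \<in> Hn"
    then obtain a b where "e = {a, b}" using simple_graph_on_edgeE[OF sg] by blast
    then have "{f\<in>Hn. e \<inter> f \<noteq> {}} = {f\<in>Hn. a \<in> f} \<union> {f\<in>Hn. b \<in> f}" by auto
    then show "card {f\<in>Hn. e \<inter> f \<noteq> {}} \<le> 2 * n"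
      using card_Un_le card_edges_containing_le[OF sg, of a] card_edges_containing_le[OF sg, of b]
      by (metis (no_types, lifting) add_mono mult_2 order_trans)
  qed
  finally show ?thesis by (simp add: mult.commute)
qed

lemma discrepancy_ge:
  fixes q :: real
  assumes "U \<subseteq> {..<n}"
  shows "\<bar>induced_edges H U - q * real (card U) ^ 2 / 2\<bar> \<le> discrepancy n H q"
  unfolding discrepancy_def using assms by (intro Max_ge) (auto intro: finite_image_set)

lemma discrepancy_nonneg: "discrepancy n H q \<ge> 0"
  using discrepancy_ge[of "{}" n H q] by simp

lemma induced_edges_lessThan: "simple_graph_on n Hn \<Longrightarrow> induced_edges Hn {..<n} = card Hn"
  unfolding simple_graph_on_def induced_edges_def
  by (metis (no_types, lifting) Collect_cong Collect_mem_eq)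

lemma card_edges_ge_discrepancy:
  fixes Q :: real
  assumes "simple_graph_on n Hn"
  shows "Q * n^2 / 2 - discrepancy n Hn Q \<le> card Hn"
  using discrepancy_ge[of "{..<n}" n Hn Q] induced_edges_lessThan[OF assms] by simp

lemma discrepancy_small_imp_pos:
  fixes Q :: real
  assumes "n > 0" and "Q \<noteq> 0" and "discrepancy n Hn Q \<le> \<bar>Q\<bar> * n^2 / 4"
  shows "Q > 0"
proof (rule ccontr)
  assume "\<not> Q > 0"
  then have "\<bar>Q\<bar> * n^2 / 2 \<le> \<bar>induced_edges Hn {..<n} - Q * real (card {..<n}) ^ 2 / 2\<bar>" by simp
  also have "\<dots> \<le> discrepancy n Hn Q" by (rule discrepancy_ge) simp
  moreover have "\<bar>Q\<bar> * n^2 > 0" using assms(1,2) by simp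
  ultimately show False using assms(3) by linarith
qed

lemma card_edges_le_sum_induced:
  assumes sg: "simple_graph_on n Hn" and "X \<subseteq> Hn" and "finite \<G>"
    and cover: "\<And>v. v < n \<Longrightarrow> \<exists>G\<in>\<G>. component n X v \<subseteq> G"
  shows "card X \<le> (\<Sum>G\<in>\<G>. induced_edges Hn G)"
proof -
  have "X \<subseteq> (\<Union>G\<in>\<G>. {e\<in>Hn. e \<subseteq> G})"
  proof
    fix e assume "e \<in> X"
    moreover from this obtain a b where ab: "e = {a, b}" "a < n" "b < n"
      using simple_graph_on_edgeE[OF sg] \<open>X \<subseteq> Hn\<close> by blast
    ultimately have "e \<subseteq> component n X a" using edge_in_component in_component_self by auto
    then show "e \<in> (\<Union>G\<in>\<G>. {e\<in>Hn. e \<subseteq> G})" using cover[OF ab(2)] \<open>e \<in> X\<close> \<open>X \<subseteq> Hn\<close> by blast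
  qed
  then have "card X \<le> card (\<Union>G\<in>\<G>. {e\<in>Hn. e \<subseteq> G})"
    using simple_graph_on_finite[OF sg] \<open>finite \<G>\<close> by (intro card_mono) auto
  also have "\<dots> \<le> (\<Sum>G\<in>\<G>. induced_edges Hn G)"
    unfolding induced_edges_def by (rule card_UN_le[OF \<open>finite \<G>\<close>])
  finally show ?thesis .
qed

text \<open>Applying the discrepancy bound to each component separately could cost \<open>n\<close> error terms;
  grouping the components into sets of size at most \<open>x\<close>, at most one of them small, costs only
  \<open>2n/x + 1\<close>.\<close>
lemma card_edges_le_if_components_small:
  fixes x q D :: real
  assumes sg: "simple_graph_on n Hn" and "X \<subseteq> Hn" and "x > 0"
    and small: "\<And>v. v < n \<Longrightarrow> card (component n X v) \<le> x"
    and induced: "\<And>U. U \<subseteq> {..<n} \<Longrightarrow> induced_edges Hn U \<le> q * real (card U) ^ 2 / 2 + D"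
    and "q \<ge> 0" and "D \<ge> 0" and "real r * x \<le> n" and "n \<le> (real r + 1) * x"
  shows "card X \<le> q / 2 * (real r * x^2 + (n - real r * x)^2) + (2 * real n / x + 1) * D"
proof -
  let ?\<C> = "component n X ` {..<n}"
  have small_comps: "finite C \<and> card C \<le> x" if "C \<in> ?\<C>" for C
    using that small finite_subset[OF component_subset] by auto
  obtain \<G> where "coarsening x ?\<C> \<G>" and one_small: "card {G\<in>\<G>. card G \<le> x / 2} \<le> 1"
    by (rule exists_coarsening_one_small_part[OF _ disjoint_components small_comps]) auto
  then have fin: "finite \<G>" and pw: "pairwise disjnt \<G>" and U: "\<Union>\<G> = {..<n}"
    and parts: "\<And>G. G \<in> \<G> \<Longrightarrow> finite G \<and> card G \<le> x"
    and cover: "\<And>v. v < n \<Longrightarrow> \<exists>G\<in>\<G>. component n X v \<subseteq> G"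
    unfolding coarsening_def Union_components by auto
  have sum_card: "(\<Sum>G\<in>\<G>. real (card G)) = n"
    using card_Union_disjoint[OF pw] parts U by (metis card_lessThan of_nat_sum)
  have "(\<Sum>G\<in>\<G>. real (card G) ^ 2) \<le> real r * x^2 + (n - real r * x)^2"
    using sum_squares_le_if_bounded[OF fin, of "\<lambda>G. real (card G)" x r] parts assms(8,9)
    unfolding sum_card by auto
  then have squares:
      "q / 2 * (\<Sum>G\<in>\<G>. real (card G) ^ 2) \<le> q / 2 * (real r * x^2 + (n - real r * x)^2)"
    using \<open>q \<ge> 0\<close> by (intro mult_left_mono) auto
  have "card \<G> \<le> 2 * real n / x + 1"
    using card_parts_le_if_one_small_part[OF fin pw _ \<open>x > 0\<close> one_small] parts U by simp
  then have errors: "card \<G> * D \<le> (2 * real n / x + 1) * D"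
    using \<open>D \<ge> 0\<close> by (intro mult_right_mono) auto
  have "card X \<le> (\<Sum>G\<in>\<G>. real (induced_edges Hn G))"
    using card_edges_le_sum_induced[OF sg \<open>X \<subseteq> Hn\<close> fin cover] by (simp flip: of_nat_sum)
  also have "\<dots> \<le> (\<Sum>G\<in>\<G>. q * real (card G) ^ 2 / 2 + D)"
    using induced U by (intro sum_mono) auto
  also have "\<dots> = q / 2 * (\<Sum>G\<in>\<G>. real (card G) ^ 2) + card \<G> * D"
    by (simp add: sum.distrib sum_distrib_left sum_divide_distrib)
  finally show ?thesis using squares errors by linarith
qed

section \<open>Second moment bounds\<close>

lemma prob_mono_on_set_pmf:
  assumes "\<And>x. x \<in> set_pmf M \<Longrightarrow> x \<in> A \<Longrightarrow> x \<in> B"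
  shows "measure_pmf.prob M A \<le> measure_pmf.prob M B"
  using assms by (intro measure_pmf.finite_measure_mono_AE) (auto simp: AE_measure_pmf_iff)

lemma integrable_measure_pmf_indicator: "integrable (measure_pmf M) (indicator A :: 'a \<Rightarrow> real)"
  by (rule measure_pmf.integrable_const_bound[where B=1]) (auto simp: indicator_def)

lemma centred_indicator_product:
  "(indicator A x - a) * (indicator B x - b) =
    (indicator (A \<inter> B) x - b * indicator A x - (a * indicator B x - a * b) :: real)"
  by (simp add: indicator_inter_arith algebra_simps)

lemma variance_sum_indicators:
  fixes M :: "'a pmf" and E :: "'i \<Rightarrow> 'a set"
  defines "P A \<equiv> measure_pmf.prob M A"
  assumes "finite I"
  shows "measure_pmf.variance M (\<lambda>x. \<Sum>j\<in>I. indicator (E j) x) =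
    (\<Sum>j\<in>I. \<Sum>k\<in>I. P (E j \<inter> E k) - P (E j) * P (E k))"
proof -
  have mean: "measure_pmf.expectation M (\<lambda>x. \<Sum>j\<in>I. indicator (E j) x) = (\<Sum>j\<in>I. P (E j))"
    unfolding P_def by (simp add: integrable_measure_pmf_indicator)
  have "((\<Sum>j\<in>I. indicator (E j) x) - (\<Sum>j\<in>I. P (E j)))^2 =
      (\<Sum>j\<in>I. \<Sum>k\<in>I. (indicator (E j) x - P (E j)) * (indicator (E k) x - P (E k)))" for x :: 'a
    by (simp add: power2_eq_square sum_product flip: sum_subtractf)
  then show ?thesis
    unfolding mean P_def centred_indicator_product
    by (simp add: integrable_measure_pmf_indicator Bochner_Integration.integral_sum mult.commute)
qed

lemma variance_sum_indicators_le:
  fixes M :: "'a pmf" and E :: "'i \<Rightarrow> 'a set" and Bad :: "('i \<times> 'i) set"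
  defines "P A \<equiv> measure_pmf.prob M A"
  assumes "finite I"
    and uncorrelated: "\<And>j k. j \<in> I \<Longrightarrow> k \<in> I \<Longrightarrow> (j, k) \<notin> Bad \<Longrightarrow> P (E j \<inter> E k) \<le> P (E j) * P (E k)"
  shows "measure_pmf.variance M (\<lambda>x. \<Sum>j\<in>I. indicator (E j) x) \<le> card (Bad \<inter> I \<times> I)"
proof -
  let ?f = "\<lambda>x. \<Sum>j\<in>I. indicator (E j) x :: real"
  have "measure_pmf.variance M ?f \<le> (\<Sum>j\<in>I. \<Sum>k\<in>I. of_bool ((j, k) \<in> Bad))"
    unfolding variance_sum_indicators[OF \<open>finite I\<close>] P_def[symmetric]
  proof (intro sum_mono)
    fix j k assume "j \<in> I" "k \<in> I"
    show "P (E j \<inter> E k) - P (E j) * P (E k) \<le> of_bool ((j, k) \<in> Bad)"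
    proof (cases "(j, k) \<in> Bad")
      case True
      have "P (E j \<inter> E k) \<le> 1" "P (E j) * P (E k) \<ge> 0" unfolding P_def by simp_all
      then show ?thesis using True by simp
    next
      case False
      then show ?thesis using uncorrelated \<open>j \<in> I\<close> \<open>k \<in> I\<close> by simp
    qed
  qed
  also have "\<dots> = (\<Sum>p\<in>I \<times> I. of_bool (p \<in> Bad))"
    by (simp add: sum.cartesian_product case_prod_eta del: sum_of_bool_eq)
  also have "\<dots> = card (Bad \<inter> I \<times> I)"
    using \<open>finite I\<close> by (simp add: Int_def conj_commute)
  finally show ?thesis .
qed

lemma prob_deviation_sum_indicators_le:
  fixes M :: "'a pmf" and E :: "'i \<Rightarrow> 'a set" and Bad :: "('i \<times> 'i) set"
  defines "P A \<equiv> measure_pmf.prob M A"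
  assumes "finite I" and "t > 0"
    and uncorrelated: "\<And>j k. j \<in> I \<Longrightarrow> k \<in> I \<Longrightarrow> (j, k) \<notin> Bad \<Longrightarrow> P (E j \<inter> E k) \<le> P (E j) * P (E k)"
  shows "P {x. t \<le> \<bar>(\<Sum>j\<in>I. indicator (E j) x) - (\<Sum>j\<in>I. P (E j))\<bar>} \<le> card (Bad \<inter> I \<times> I) / t^2"
proof -
  let ?f = "\<lambda>x. \<Sum>j\<in>I. indicator (E j) x :: real"
  have "integrable M (\<lambda>x. ?f x ^ 2)"
    by (simp add: power2_eq_square sum_product integrable_measure_pmf_indicator flip: indicator_inter_arith)
  moreover have "measure_pmf.expectation M ?f = (\<Sum>j\<in>I. P (E j))"
    unfolding P_def by (simp add: integrable_measure_pmf_indicator)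
  ultimately have "P {x. t \<le> \<bar>?f x - (\<Sum>j\<in>I. P (E j))\<bar>} \<le> measure_pmf.variance M ?f / t^2"
    using measure_pmf.Chebyshev_inequality[of ?f M t] \<open>t > 0\<close> unfolding P_def by simp
  also have "\<dots> \<le> card (Bad \<inter> I \<times> I) / t^2"
    using variance_sum_indicators_le[OF \<open>finite I\<close> uncorrelated[unfolded P_def]]
    by (simp add: divide_right_mono)
  finally show ?thesis .
qed

section \<open>The collision probability of a colour distribution\<close>

definition colour_collision :: "nat \<Rightarrow> real \<Rightarrow> real" where
  "colour_collision r c = real r * c^2 + (1 - real r * c)^2"

lemma colour_collision_threshold:
  fixes p :: real
  assumes "r \<ge> 1" and "1 / real (r + 1) < p" and "p \<le> 1 / real r"
  defines "c \<equiv> (1 + sqrt ((real (r + 1) * p - 1) / real r)) / real (r + 1)"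
  shows "1 / real (r + 1) < c" and "c \<le> 1 / real r" and "colour_collision r c = p"
proof -
  define s where "s = sqrt ((real (r + 1) * p - 1) / real r)"
  have r: "real r > 0" using \<open>r \<ge> 1\<close> by simp
  have arg: "(real (r + 1) * p - 1) / real r > 0"
    using assms(2) r by (simp add: field_simps)
  have s2: "s^2 = (real (r + 1) * p - 1) / real r" and "s > 0"
    unfolding s_def using arg by simp_all
  have cs: "c * real (r + 1) = 1 + s" unfolding c_def s_def by simp
  show "1 / real (r + 1) < c" using cs \<open>s > 0\<close> by (simp add: field_simps)
  have "real (r + 1) * p \<le> real (r + 1) * (1 / real r)"
    using assms(3) by (intro mult_left_mono) auto
  then have "real (r + 1) * p - 1 \<le> 1 / real r" using r by (simp add: field_simps)
  then have "(real (r + 1) * p - 1) / real r \<le> (1 / real r) / real r"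
    using r by (intro divide_right_mono) auto
  then have "(real (r + 1) * p - 1) / real r \<le> (1 / real r)^2"
    by (simp add: power2_eq_square)
  then have "s^2 \<le> (1 / real r)^2" using s2 by simp
  then have "s \<le> 1 / real r" by (rule power2_le_imp_le) (use r in simp)
  then have "c * real (r + 1) \<le> 1 + 1 / real r" using cs by linarith
  also have "\<dots> = (1 / real r) * real (r + 1)" using r by (simp add: field_simps)
  finally show "c \<le> 1 / real r" by (rule mult_right_le_imp_le) simp
  have "real (r + 1) * colour_collision r c =
      real r * (c * real (r + 1))^2 - 2 * real r * (c * real (r + 1)) + real (r + 1)"
    unfolding colour_collision_def by (simp add: power2_eq_square algebra_simps)
  also have "\<dots> = real r * s^2 + 1"
    unfolding cs by (simp add: power2_eq_square algebra_simps)
  also have "\<dots> = real (r + 1) * p" unfolding s2 using r by simp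
  finally show "colour_collision r c = p" by simp
qed

lemma colour_collision_less:
  assumes "r \<ge> 1" and "1 / real (r + 1) \<le> y" and "y < z"
  shows "colour_collision r y < colour_collision r z"
proof -
  have diff: "colour_collision r z - colour_collision r y =
      (z - y) * real r * ((real r + 1) * (z + y) - 2)"
    unfolding colour_collision_def by (simp add: power2_eq_square algebra_simps)
  have "(real r + 1) * y < (real r + 1) * z"
    using assms(3) by (intro mult_strict_left_mono) auto
  moreover have "1 \<le> (real r + 1) * y"
    using assms(2) by (simp add: field_simps)
  ultimately have "(real r + 1) * (z + y) > 2" unfolding distrib_left by linarith
  then have "(z - y) * real r * ((real r + 1) * (z + y) - 2) > 0"
    using assms(1,3) by (intro mult_pos_pos) auto
  then show ?thesis using diff by linarith
qed

section \<open>Every 1-independent model has a large component\<close>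

lemma one_independent_disjoint_edges:
  assumes "one_independent Hn \<mu>" and "e \<in> Hn" and "f \<in> Hn" and "e \<inter> f = {}"
  shows "measure_pmf.prob \<mu> ({X. e \<in> X} \<inter> {X. f \<in> X}) =
    measure_pmf.prob \<mu> {X. e \<in> X} * measure_pmf.prob \<mu> {X. f \<in> X}"
proof -
  have "measure_pmf.prob \<mu> {X. X \<inter> {e} = {e} \<and> X \<inter> {f} = {f}} =
      measure_pmf.prob \<mu> {X. X \<inter> {e} = {e}} * measure_pmf.prob \<mu> {X. X \<inter> {f} = {f}}"
    using assms(2-4)
    by (intro assms(1)[unfolded one_independent_def, rule_format, of "{e}" "{f}"]) auto
  moreover have "{X. X \<inter> {e} = {e} \<and> X \<inter> {f} = {f}} = {X. e \<in> X} \<inter> {X. f \<in> X}"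
    and "{X. X \<inter> {e} = {e}} = {X. e \<in> X}" and "{X. X \<inter> {f} = {f}} = {X. f \<in> X}"
    by auto
  ultimately show ?thesis by simp
qed

lemma M1p_prob_few_edges_le:
  fixes \<delta> :: real
  assumes \<mu>: "\<mu> \<in> M1p Hn p" and sg: "simple_graph_on n Hn" and "\<delta> > 0" and "card Hn > 0"
    and few: "\<And>X. X \<in> S \<Longrightarrow> X \<subseteq> Hn \<Longrightarrow> card X \<le> (p - \<delta>) * card Hn"
  shows "measure_pmf.prob \<mu> S \<le> 2 * real n / (\<delta>^2 * card Hn)"
proof -
  define E where "E e = {X. e \<in> X}" for e :: "nat set"
  have fin: "finite Hn" using simple_graph_on_finite[OF sg] .
  have supp: "set_pmf \<mu> \<subseteq> Pow Hn" and indep: "one_independent Hn \<mu>"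
    and edge: "\<And>e. e \<in> Hn \<Longrightarrow> measure_pmf.prob \<mu> (E e) = p"
    using \<mu> unfolding M1p_def E_def by auto
  have count: "(\<Sum>e\<in>Hn. indicator (E e) X) = real (card X)" if "X \<subseteq> Hn" for X
    using that fin by (simp add: E_def indicator_def Int_absorb1 Collect_conj_eq Int_commute)
  let ?t = "\<delta> * card Hn"
  let ?deviation = "\<lambda>X. \<bar>(\<Sum>e\<in>Hn. indicator (E e) X) - (\<Sum>e\<in>Hn. measure_pmf.prob \<mu> (E e))\<bar>"
  have "measure_pmf.prob \<mu> S \<le> measure_pmf.prob \<mu> {X. ?t \<le> ?deviation X}"
  proof (rule prob_mono_on_set_pmf)
    fix X assume "X \<in> set_pmf \<mu>" and "X \<in> S"
    then have "X \<subseteq> Hn" and "card X \<le> (p - \<delta>) * card Hn" using supp few by auto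
    then show "X \<in> {X. ?t \<le> ?deviation X}"
      using count edge by (simp add: algebra_simps)
  qed
  also have "\<dots> \<le> card ({(e, f). e \<inter> f \<noteq> {}} \<inter> Hn \<times> Hn) / ?t^2"
  proof (rule prob_deviation_sum_indicators_le[OF fin])
    fix e f assume "e \<in> Hn" "f \<in> Hn" "(e, f) \<notin> {(e, f). e \<inter> f \<noteq> {}}"
    then show "measure_pmf.prob \<mu> (E e \<inter> E f) \<le> measure_pmf.prob \<mu> (E e) * measure_pmf.prob \<mu> (E f)"
      using one_independent_disjoint_edges[OF indep] unfolding E_def by simp
  qed (use \<open>\<delta> > 0\<close> \<open>card Hn > 0\<close> in simp)
  also have "\<dots> \<le> 2 * real n * card Hn / ?t^2"
  proof (intro divide_right_mono)
    have "card ({(e, f). e \<inter> f \<noteq> {}} \<inter> Hn \<times> Hn) \<le> 2 * n * card Hn"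
      by (rule card_intersecting_edge_pairs_le[OF sg])
    then show "real (card ({(e, f). e \<inter> f \<noteq> {}} \<inter> Hn \<times> Hn)) \<le> 2 * real n * card Hn"
      using of_nat_mono by fastforce
  qed simp
  also have "\<dots> = 2 * real n / (\<delta>^2 * card Hn)"
    using \<open>card Hn > 0\<close> by (simp add: power2_eq_square)
  finally show ?thesis .
qed

lemma card_edges_deficit_if_components_small:
  fixes n :: nat and Hn :: "nat set set" and c' \<delta> Q :: real
  defines "D \<equiv> discrepancy n Hn Q"
  assumes sg: "simple_graph_on n Hn" and "X \<subseteq> Hn" and "n > 0" and "Q > 0"
    and c': "1 / real (r + 1) \<le> c'" "c' \<le> 1 / real r"
    and "\<delta> > 0" and gap: "colour_collision r c' + 2 * \<delta> \<le> p"
    and error: "(2 / c' + 1 + p) * D \<le> \<delta> * (Q * n^2 / 2)"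
    and small: "\<And>v. v < n \<Longrightarrow> card (component n X v) \<le> c' * n"
  shows "card X \<le> (p - \<delta>) * card Hn"
proof -
  define A where "A = Q * n^2 / 2"
  define F where "F = colour_collision r c'"
  have "D \<ge> 0" unfolding D_def by (rule discrepancy_nonneg)
  have "c' > 0" using c'(1) by (rule order.strict_trans2[rotated]) simp
  have "F \<ge> 0" unfolding F_def colour_collision_def by simp
  have "A - D \<le> card Hn"
    using card_edges_ge_discrepancy[OF sg] unfolding A_def D_def .
  have "real r * c' \<le> 1" using c'(2) \<open>c' > 0\<close> by (cases "r = 0") (auto simp: field_simps)
  then have "real r * c' * n \<le> 1 * real n" by (intro mult_right_mono) auto
  then have "real r * (c' * n) \<le> n" by (simp add: mult.assoc)
  moreover have "1 \<le> (real r + 1) * c'" using c'(1) by (simp add: field_simps)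
  then have "1 * real n \<le> (real r + 1) * c' * n" by (intro mult_right_mono) auto
  then have "n \<le> (real r + 1) * (c' * n)" by (simp add: mult.assoc)
  moreover have "induced_edges Hn U \<le> Q * real (card U) ^ 2 / 2 + D" if "U \<subseteq> {..<n}" for U
    using discrepancy_ge[OF that, of Hn Q] unfolding D_def by (simp add: abs_le_iff)
  ultimately have "card X \<le>
      Q / 2 * (real r * (c' * n)^2 + (n - real r * (c' * n))^2) + (2 * real n / (c' * n) + 1) * D"
    using \<open>c' > 0\<close> \<open>n > 0\<close> \<open>Q > 0\<close> \<open>D \<ge> 0\<close> small
    by (intro card_edges_le_if_components_small[OF sg \<open>X \<subseteq> Hn\<close>]) auto
  also have "\<dots> = F * A + (2 / c' + 1) * D"
    unfolding F_def A_def colour_collision_def using \<open>n > 0\<close>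
    by (simp add: power2_eq_square algebra_simps)
  also have "\<dots> \<le> (p - \<delta>) * (A - D)"
  proof -
    have "(F + \<delta>) * A \<le> (p - \<delta>) * A" using gap \<open>Q > 0\<close> unfolding F_def A_def
      by (intro mult_right_mono) auto
    moreover have "(p - \<delta> + (2 / c' + 1)) * D \<le> \<delta> * A"
      using error \<open>\<delta> > 0\<close> \<open>D \<ge> 0\<close> unfolding A_def by (smt (verit) mult_right_mono)
    ultimately show ?thesis by (simp add: algebra_simps)
  qed
  also have "\<dots> \<le> (p - \<delta>) * card Hn"
    using \<open>A - D \<le> card Hn\<close> gap \<open>F \<ge> 0\<close> \<open>\<delta> > 0\<close> unfolding F_def by (intro mult_left_mono) auto
  finally show ?thesis .
qed

lemma M1p_prob_components_small_le:
  fixes n :: nat and Hn :: "nat set set" and c' \<delta> Q :: real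
  defines "D \<equiv> discrepancy n Hn Q"
  assumes \<mu>: "\<mu> \<in> M1p Hn p" and sg: "simple_graph_on n Hn" and "n \<ge> 2"
    and c': "1 / real (r + 1) \<le> c'" "c' \<le> 1 / real r"
    and "\<delta> > 0" and gap: "colour_collision r c' + 2 * \<delta> \<le> p"
    and dense: "ln n / n \<le> \<bar>Q\<bar>" and "D \<le> \<bar>Q\<bar> * n^2 / 4"
    and error: "(2 / c' + 1 + p) * D \<le> \<delta> * (\<bar>Q\<bar> * n^2 / 2)"
  shows "measure_pmf.prob \<mu> {X. \<forall>v<n. card (component n X v) \<le> c' * n} \<le> 8 / (\<delta>^2 * ln n)"
proof -
  have "n > 0" "ln n > 0" using \<open>n \<ge> 2\<close> by auto
  then have "Q \<noteq> 0" using dense by (auto simp: divide_le_0_iff)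
  then have "Q > 0"
    using discrepancy_small_imp_pos \<open>n > 0\<close> \<open>D \<le> \<bar>Q\<bar> * n^2 / 4\<close> unfolding D_def by blast
  then have edges: "Q * n^2 / 4 \<le> card Hn"
    using card_edges_ge_discrepancy[OF sg, of Q] \<open>D \<le> \<bar>Q\<bar> * n^2 / 4\<close> unfolding D_def by simp
  moreover have "Q * n^2 / 4 > 0" using \<open>n > 0\<close> \<open>Q > 0\<close> by simp
  ultimately have "card Hn > 0" by linarith
  have "measure_pmf.prob \<mu> {X. \<forall>v<n. card (component n X v) \<le> c' * n} \<le> 2 * real n / (\<delta>^2 * card Hn)"
    using card_edges_deficit_if_components_small[OF sg _ \<open>n > 0\<close> \<open>Q > 0\<close> c' \<open>\<delta> > 0\<close> gap]
      error \<open>Q > 0\<close> unfolding D_def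
    by (intro M1p_prob_few_edges_le[OF \<mu> sg \<open>\<delta> > 0\<close> \<open>card Hn > 0\<close>]) auto
  also have "\<dots> \<le> 2 * real n / (\<delta>^2 * (Q * n^2 / 4))"
    using edges \<open>Q * n^2 / 4 > 0\<close> \<open>\<delta> > 0\<close> by (intro divide_left_mono mult_left_mono) auto
  also have "\<dots> = 8 / (\<delta>^2 * (Q * n))"
    using \<open>n > 0\<close> by (simp add: power2_eq_square)
  also have "\<dots> \<le> 8 / (\<delta>^2 * ln n)"
    using dense \<open>Q > 0\<close> \<open>n > 0\<close> \<open>ln n > 0\<close> \<open>\<delta> > 0\<close>
    by (intro divide_left_mono) (auto simp: divide_le_eq)
  finally show ?thesis .
qed

lemma M1p_components_small_tendsto_0:
  fixes c' :: real
  assumes H: "weakly_pseudorandom H q" and lq: "(\<lambda>n. ln (real n) / real n) \<in> o(q)"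
    and \<mu>: "\<And>n. \<mu> n \<in> M1p (H n) p"
    and c': "1 / real (r + 1) \<le> c'" "c' \<le> 1 / real r" and "colour_collision r c' < p"
  shows "(\<lambda>n. measure_pmf.prob (\<mu> n) {X. \<forall>v<n. card (component n X v) \<le> c' * n}) \<longlonglongrightarrow> 0"
proof -
  define \<delta> where "\<delta> = (p - colour_collision r c') / 2"
  define K where "K = 2 / c' + 1 + p"
  have "\<delta> > 0" using \<open>colour_collision r c' < p\<close> unfolding \<delta>_def by simp
  have gap: "colour_collision r c' + 2 * \<delta> \<le> p" unfolding \<delta>_def by (simp add: field_simps)
  have "c' > 0" using c'(1) by (rule order.strict_trans2[rotated]) simp
  moreover have "colour_collision r c' \<ge> 0" unfolding colour_collision_def by simp
  ultimately have "K > 0" using \<open>colour_collision r c' < p\<close> unfolding K_def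
    by (smt (verit) divide_pos_pos)
  have sg: "\<And>n. simple_graph_on n (H n)"
    and disc: "(\<lambda>n. discrepancy n (H n) (q n)) \<in> o(\<lambda>n. q n * real n ^ 2)"
    using H unfolding weakly_pseudorandom_def by auto
  have "\<delta> / (2 * K) > 0" using \<open>\<delta> > 0\<close> \<open>K > 0\<close> by simp
  have upper: "eventually (\<lambda>n. measure_pmf.prob (\<mu> n) {X. \<forall>v<n. card (component n X v) \<le> c' * n}
      \<le> 8 / (\<delta>^2 * ln n)) sequentially"
    using landau_o.smallD[OF disc \<open>\<delta> / (2 * K) > 0\<close>] landau_o.smallD[OF disc, of "1 / 4", simplified]
      landau_o.smallD[OF lq, of 1, simplified] eventually_ge_at_top[of 2]
  proof eventually_elim
    case (elim n)
    let ?D = "discrepancy n (H n) (q n)"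
    have "?D \<ge> 0" by (rule discrepancy_nonneg)
    then have "K * ?D \<le> K * (\<delta> / (2 * K) * (\<bar>q n\<bar> * n^2))"
      using elim(1) \<open>K > 0\<close> by (intro mult_left_mono) (auto simp: abs_mult)
    also have "\<dots> = \<delta> * (\<bar>q n\<bar> * n^2 / 2)" using \<open>K > 0\<close> by (simp add: field_simps)
    finally have "(2 / c' + 1 + p) * ?D \<le> \<delta> * (\<bar>q n\<bar> * n^2 / 2)" unfolding K_def .
    moreover have "?D \<le> \<bar>q n\<bar> * n^2 / 4" and "ln n / n \<le> \<bar>q n\<bar>"
      using elim(2,3,4) \<open>?D \<ge> 0\<close> by (simp_all add: abs_mult)
    ultimately show ?case
      by (intro M1p_prob_components_small_le[OF \<mu> sg elim(4) c' \<open>\<delta> > 0\<close> gap])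
  qed
  have "(\<lambda>n. 8 / \<delta>^2 * (1 / ln (real n))) \<longlonglongrightarrow> 0"
    by (intro tendsto_mult_right_zero) real_asymp
  then have lim: "(\<lambda>n. 8 / (\<delta>^2 * ln (real n))) \<longlonglongrightarrow> 0" by simp
  show ?thesis by (rule tendsto_sandwich[OF _ upper tendsto_const lim]) simp
qed

lemma M1p_largest_component_ge_tendsto_1:
  fixes c \<epsilon> :: real
  assumes "r \<ge> 1" and H: "weakly_pseudorandom H q" and lq: "(\<lambda>n. ln (real n) / real n) \<in> o(q)"
    and \<mu>: "\<And>n. \<mu> n \<in> M1p (H n) p"
    and c: "1 / real (r + 1) < c" "c \<le> 1 / real r" "colour_collision r c = p" and "\<epsilon> > 0"
  shows "(\<lambda>n. measure_pmf.prob (\<mu> n) {X. (1 - \<epsilon>) * c * n \<le> largest_component_size n X}) \<longlonglongrightarrow> 1"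
proof -
  \<comment> \<open>The lower cap keeps \<open>c'\<close> in the range where \<open>colour_collision r\<close> is increasing.\<close>
  define c' where "c' = max ((1 - \<epsilon>) * c) (1 / real (r + 1))"
  define small where "small n = {X. \<forall>v<n. card (component n X v) \<le> c' * n}" for n
  have "c > 0" using c(1) by (rule order.strict_trans[rotated]) simp
  then have "c' < c" unfolding c'_def using c(1) \<open>\<epsilon> > 0\<close> by simp
  have c': "1 / real (r + 1) \<le> c'" "c' \<le> 1 / real r"
    using \<open>c' < c\<close> c(2) unfolding c'_def by auto
  have "colour_collision r c' < p"
    using colour_collision_less[OF \<open>r \<ge> 1\<close> c'(1) \<open>c' < c\<close>] c(3) by simp
  then have "(\<lambda>n. measure_pmf.prob (\<mu> n) (small n)) \<longlonglongrightarrow> 0"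
    unfolding small_def by (rule M1p_components_small_tendsto_0[OF H lq \<mu> c'])
  then have lim: "(\<lambda>n. 1 - measure_pmf.prob (\<mu> n) (small n)) \<longlonglongrightarrow> 1"
    by (auto intro: tendsto_eq_intros)
  have lower: "1 - measure_pmf.prob (\<mu> n) (small n) \<le>
      measure_pmf.prob (\<mu> n) {X. (1 - \<epsilon>) * c * n \<le> largest_component_size n X}" for n
  proof -
    let ?G = "{X. (1 - \<epsilon>) * c * n \<le> largest_component_size n X}"
    have "UNIV - ?G \<subseteq> small n"
    proof
      fix X assume "X \<in> UNIV - ?G"
      then have "largest_component_size n X < (1 - \<epsilon>) * c * n" by simp
      moreover have "(1 - \<epsilon>) * c * n \<le> c' * n" unfolding c'_def by (intro mult_right_mono) auto
      moreover have "card (component n X v) \<le> real (largest_component_size n X)" if "v < n" for v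
        using card_component_le_largest[OF that] by simp
      ultimately have "card (component n X v) \<le> c' * n" if "v < n" for v
        using that by (meson less_le_trans less_imp_le order_trans)
      then show "X \<in> small n" unfolding small_def by simp
    qed
    then have "measure_pmf.prob (\<mu> n) (UNIV - ?G) \<le> measure_pmf.prob (\<mu> n) (small n)"
      by (intro measure_pmf.finite_measure_mono) auto
    then show ?thesis using measure_pmf.prob_compl[of ?G "\<mu> n"] by simp
  qed
  show ?thesis by (rule tendsto_sandwich[OF _ _ lim tendsto_const]) (use lower in auto)
qed

section \<open>Random colourings\<close>

lemma measure_pair_pmf_Times:
  "measure_pmf.prob (pair_pmf M N) (A \<times> B) = measure_pmf.prob M A * measure_pmf.prob N B"
proof -
  have "measure_pmf.prob (pair_pmf M N) (A \<times> B) =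
      measure_pmf.prob (pair_pmf M N) ((A \<inter> set_pmf M) \<times> (B \<inter> set_pmf N))"
    by (subst (1 2) measure_Int_set_pmf[symmetric]) (auto simp: set_pair_pmf intro: arg_cong2[where f=measure])
  also have "\<dots> = measure_pmf.prob M (A \<inter> set_pmf M) * measure_pmf.prob N (B \<inter> set_pmf N)"
    by (intro measure_pmf_prob_product) (auto intro: countable_subset[OF _ countable_set_pmf])
  finally show ?thesis by (simp add: measure_Int_set_pmf)
qed

lemma measure_Pi_pmf_Int_disjoint_coordinates:
  assumes "finite V" and "P \<subseteq> V" and "P \<inter> Q = {}"
    and F: "\<And>\<phi> \<psi>. (\<forall>x\<in>P. \<phi> x = \<psi> x) \<Longrightarrow> \<phi> \<in> F \<longleftrightarrow> \<psi> \<in> F"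
    and G: "\<And>\<phi> \<psi>. (\<forall>x\<in>Q. \<phi> x = \<psi> x) \<Longrightarrow> \<phi> \<in> G \<longleftrightarrow> \<psi> \<in> G"
  shows "measure_pmf.prob (Pi_pmf V dflt p) (F \<inter> G) =
    measure_pmf.prob (Pi_pmf V dflt p) F * measure_pmf.prob (Pi_pmf V dflt p) G"
proof -
  define h :: "('a \<Rightarrow> 'b) \<times> ('a \<Rightarrow> 'b) \<Rightarrow> 'a \<Rightarrow> 'b" where "h = (\<lambda>(f, g) x. if x \<in> P then f x else g x)"
  have "finite P" using assms(1,2) finite_subset by blast
  have "Pi_pmf V dflt p = Pi_pmf (P \<union> (V - P)) dflt p" using assms(2) by (simp add: Un_absorb1)
  also have "\<dots> = map_pmf h (pair_pmf (Pi_pmf P dflt p) (Pi_pmf (V - P) dflt p))"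
    unfolding h_def using \<open>finite P\<close> assms(1) by (intro Pi_pmf_union) auto
  finally have split: "Pi_pmf V dflt p = map_pmf h (pair_pmf (Pi_pmf P dflt p) (Pi_pmf (V - P) dflt p))" .
  have "h (f, g) \<in> F \<longleftrightarrow> f \<in> F" for f g by (rule F) (auto simp: h_def)
  moreover have "h (f, g) \<in> G \<longleftrightarrow> g \<in> G" for f g by (rule G) (use assms(3) in \<open>auto simp: h_def\<close>)
  ultimately have pre: "h -` (F \<inter> G) = F \<times> G" "h -` F = F \<times> UNIV" "h -` G = UNIV \<times> G" by auto
  show ?thesis unfolding split measure_map_pmf pre measure_pair_pmf_Times by simp
qed

definition colour_weight :: "nat \<Rightarrow> real \<Rightarrow> nat \<Rightarrow> real" where
  "colour_weight r c i = (if i < r then c else if i = r then 1 - real r * c else 0)"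

definition colour_pmf :: "nat \<Rightarrow> real \<Rightarrow> nat pmf" where
  "colour_pmf r c = embed_pmf (colour_weight r c)"

definition random_colouring :: "nat \<Rightarrow> nat \<Rightarrow> real \<Rightarrow> (nat \<Rightarrow> nat) pmf" where
  "random_colouring n r c = Pi_pmf {..<n} 0 (\<lambda>_. colour_pmf r c)"

definition monochromatic_edges :: "nat set set \<Rightarrow> (nat \<Rightarrow> nat) \<Rightarrow> nat set set" where
  "monochromatic_edges Hn \<phi> = {e\<in>Hn. \<exists>i. \<forall>x\<in>e. \<phi> x = i}"

lemma monochromatic_edges_Int_eq:
  assumes "\<forall>x\<in>\<Union>A. \<phi> x = \<psi> x"
  shows "monochromatic_edges Hn \<phi> \<inter> A = monochromatic_edges Hn \<psi> \<inter> A"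
  using assms unfolding monochromatic_edges_def by auto

lemma component_monochromatic:
  assumes "w \<in> component n (monochromatic_edges Hn \<phi>) v"
  shows "\<phi> w = \<phi> v"
proof -
  have "(\<lambda>a b. {a, b} \<in> monochromatic_edges Hn \<phi>)\<^sup>*\<^sup>* v w" using assms unfolding component_def
    by auto
  then show ?thesis
    by (induction rule: rtranclp_induct) (auto simp: monochromatic_edges_def)
qed

lemma largest_monochromatic_component_le_colour_class:
  assumes "n > 0"
  obtains v where "v < n"
    and "largest_component_size n (monochromatic_edges Hn \<phi>) \<le> card {u\<in>{..<n}. \<phi> u = \<phi> v}"
proof -
  let ?X = "monochromatic_edges Hn \<phi>"
  have "largest_component_size n ?X \<in> (\<lambda>v. card (component n ?X v)) ` {..<n}"
    unfolding largest_component_size_def using assms by (intro Max_in) auto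
  then obtain v where "v < n" and v: "largest_component_size n ?X = card (component n ?X v)" by auto
  have "component n ?X v \<subseteq> {u\<in>{..<n}. \<phi> u = \<phi> v}"
    using component_monochromatic component_subset by blast
  then have "card (component n ?X v) \<le> card {u\<in>{..<n}. \<phi> u = \<phi> v}" by (intro card_mono) auto
  then show ?thesis using that \<open>v < n\<close> v by simp
qed

lemma one_independent_monochromatic_edges:
  assumes sg: "simple_graph_on n Hn"
  shows "one_independent Hn (map_pmf (monochromatic_edges Hn) (random_colouring n r c))"
  unfolding one_independent_def
proof (intro allI impI)
  fix A B S T assume "A \<subseteq> Hn" and "B \<subseteq> Hn" and disj: "\<Union>A \<inter> \<Union>B = {}"
  let ?M = "random_colouring n r c"
  let ?F = "{\<phi>. monochromatic_edges Hn \<phi> \<inter> A = S}" and ?G = "{\<phi>. monochromatic_edges Hn \<phi> \<inter> B = T}"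
  have "\<Union>A \<subseteq> {..<n}" using \<open>A \<subseteq> Hn\<close> sg unfolding simple_graph_on_def by blast
  have "measure_pmf.prob ?M (?F \<inter> ?G) = measure_pmf.prob ?M ?F * measure_pmf.prob ?M ?G"
    unfolding random_colouring_def
  proof (rule measure_Pi_pmf_Int_disjoint_coordinates[of _ "\<Union>A" "\<Union>B"])
    show "\<phi> \<in> ?F \<longleftrightarrow> \<psi> \<in> ?F" if "\<forall>x\<in>\<Union>A. \<phi> x = \<psi> x" for \<phi> \<psi>
      using monochromatic_edges_Int_eq[OF that] by simp
    show "\<phi> \<in> ?G \<longleftrightarrow> \<psi> \<in> ?G" if "\<forall>x\<in>\<Union>B. \<phi> x = \<psi> x" for \<phi> \<psi>
      using monochromatic_edges_Int_eq[OF that] by simp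
  qed (use disj \<open>\<Union>A \<subseteq> {..<n}\<close> in auto)
  moreover have "monochromatic_edges Hn -` {X. X \<inter> A = S \<and> X \<inter> B = T} = ?F \<inter> ?G"
    and "monochromatic_edges Hn -` {X. X \<inter> A = S} = ?F"
    and "monochromatic_edges Hn -` {X. X \<inter> B = T} = ?G" by auto
  ultimately show "measure_pmf.prob (map_pmf (monochromatic_edges Hn) ?M) {X. X \<inter> A = S \<and> X \<inter> B = T} =
      measure_pmf.prob (map_pmf (monochromatic_edges Hn) ?M) {X. X \<inter> A = S} *
      measure_pmf.prob (map_pmf (monochromatic_edges Hn) ?M) {X. X \<inter> B = T}"
    by (simp add: measure_map_pmf)
qed

locale colour_weights =
  fixes r :: nat and c :: real
  assumes lower: "1 / real (r + 1) \<le> c" and upper: "c \<le> 1 / real r"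
begin

lemma weight_pos: "c > 0"
  using lower by (rule order.strict_trans2[rotated]) simp

lemma colour_weight_nonneg: "colour_weight r c i \<ge> 0"
proof -
  have "real r * c \<le> 1" using upper weight_pos by (cases "r = 0") (auto simp: field_simps)
  then show ?thesis unfolding colour_weight_def using weight_pos by auto
qed

lemma colour_weight_le: "colour_weight r c i \<le> c"
  unfolding colour_weight_def using lower weight_pos by (auto simp: field_simps)

lemma sum_colour_weight: "(\<Sum>i\<le>r. colour_weight r c i) = 1"
  and sum_colour_weight_squared: "(\<Sum>i\<le>r. (colour_weight r c i)^2) = colour_collision r c"
proof -
  have split: "{..r} = insert r {..<r}" by auto
  show "(\<Sum>i\<le>r. colour_weight r c i) = 1" unfolding split by (simp add: colour_weight_def)
  show "(\<Sum>i\<le>r. (colour_weight r c i)^2) = colour_collision r c"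
    unfolding split by (simp add: colour_weight_def colour_collision_def)
qed

lemma pmf_colour_pmf: "pmf (colour_pmf r c) i = colour_weight r c i"
  unfolding colour_pmf_def
proof (rule pmf_embed_pmf)
  have "(\<integral>\<^sup>+ x. ennreal (colour_weight r c x) \<partial>count_space UNIV) = (\<Sum>i\<le>r. ennreal (colour_weight r c i))"
    by (rule nn_integral_count_space') (auto simp: colour_weight_def)
  also have "\<dots> = 1" using colour_weight_nonneg by (simp add: sum_ennreal sum_colour_weight)
  finally show "(\<integral>\<^sup>+ x. ennreal (colour_weight r c x) \<partial>count_space UNIV) = 1" .
qed (rule colour_weight_nonneg)

lemma prob_colour:
  assumes "u < n"
  shows "measure_pmf.prob (random_colouring n r c) {\<phi>. \<phi> u = i} = colour_weight r c i"
proof -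
  have "map_pmf (\<lambda>\<phi>. \<phi> u) (random_colouring n r c) = colour_pmf r c"
    unfolding random_colouring_def using assms by (subst Pi_pmf_component) auto
  then have "measure_pmf.prob (random_colouring n r c) ((\<lambda>\<phi>. \<phi> u) -` {i}) = pmf (colour_pmf r c) i"
    by (metis measure_map_pmf measure_pmf_single)
  then show ?thesis by (simp add: vimage_def pmf_colour_pmf)
qed

lemma prob_colour_pair:
  assumes "u < n" and "v < n" and "u \<noteq> v"
  shows "measure_pmf.prob (random_colouring n r c) ({\<phi>. \<phi> u = i} \<inter> {\<phi>. \<phi> v = j}) =
    colour_weight r c i * colour_weight r c j"
  unfolding random_colouring_def
  using assms by (subst measure_Pi_pmf_Int_disjoint_coordinates[of _ "{u}" "{v}"])
    (auto simp: prob_colour[unfolded random_colouring_def])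

lemma random_colouring_le:
  assumes "\<phi> \<in> set_pmf (random_colouring n r c)" and "u < n"
  shows "\<phi> u \<le> r"
proof -
  have "\<phi> u \<in> set_pmf (colour_pmf r c)"
    using assms unfolding random_colouring_def by (auto simp: set_Pi_pmf PiE_dflt_def)
  then show ?thesis by (auto simp: set_pmf_iff pmf_colour_pmf colour_weight_def split: if_splits)
qed

lemma prob_same_colour:
  assumes "u < n" and "v < n" and "u \<noteq> v"
  shows "measure_pmf.prob (random_colouring n r c) {\<phi>. \<phi> u = \<phi> v} = colour_collision r c"
proof -
  let ?M = "random_colouring n r c"
  define A where "A i = {\<phi>. \<phi> u = i} \<inter> {\<phi>. \<phi> v = i}" for i :: nat
  have "\<phi> \<in> (\<Union>i\<le>r. A i)" if "\<phi> \<in> set_pmf ?M" "\<phi> \<in> {\<phi>. \<phi> u = \<phi> v}" for \<phi>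
    using random_colouring_le[OF that(1) assms(1)] that(2) unfolding A_def by auto
  then have "measure_pmf.prob ?M {\<phi>. \<phi> u = \<phi> v} = measure_pmf.prob ?M (\<Union>i\<le>r. A i)"
    by (intro antisym prob_mono_on_set_pmf) (auto simp: A_def)
  also have "\<dots> = (\<Sum>i\<le>r. measure_pmf.prob ?M (A i))"
    by (rule measure_pmf.finite_measure_finite_Union) (auto simp: disjoint_family_on_def A_def)
  also have "\<dots> = (\<Sum>i\<le>r. (colour_weight r c i)^2)"
    unfolding A_def using prob_colour_pair[OF assms] by (simp add: power2_eq_square)
  finally show ?thesis by (simp add: sum_colour_weight_squared)
qed

lemma monochromatic_edges_in_M1p:
  assumes sg: "simple_graph_on n Hn"
  shows "map_pmf (monochromatic_edges Hn) (random_colouring n r c) \<in> M1p Hn (colour_collision r c)"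
  unfolding M1p_def
proof (intro CollectI conjI ballI one_independent_monochromatic_edges[OF sg])
  show "set_pmf (map_pmf (monochromatic_edges Hn) (random_colouring n r c)) \<subseteq> Pow Hn"
    by (auto simp: monochromatic_edges_def)
next
  fix e assume "e \<in> Hn"
  then obtain u v where uv: "e = {u, v}" "u \<noteq> v" "u < n" "v < n" using simple_graph_on_edgeE[OF sg]
    by blast
  then have "monochromatic_edges Hn -` {X. e \<in> X} = {\<phi>. \<phi> u = \<phi> v}"
    using \<open>e \<in> Hn\<close> unfolding monochromatic_edges_def by auto
  then show "measure_pmf.prob (map_pmf (monochromatic_edges Hn) (random_colouring n r c)) {X. e \<in> X} =
      colour_collision r c"
    using prob_same_colour[OF uv(3,4,2)] by (simp add: measure_map_pmf)
qed

lemma prob_colour_class_large_le: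
  assumes "n > 0" and "\<epsilon> > 0"
  shows "measure_pmf.prob (random_colouring n r c) {\<phi>. (1 + \<epsilon>) * c * n < card {u\<in>{..<n}. \<phi> u = i}}
    \<le> 1 / (\<epsilon>^2 * c^2 * n)"
proof -
  let ?M = "random_colouring n r c"
  define E where "E u = {\<phi>. \<phi> u = i}" for u :: nat
  have count: "(\<Sum>u\<in>{..<n}. indicator (E u) \<phi>) = real (card {u\<in>{..<n}. \<phi> u = i})" for \<phi>
    by (simp add: E_def indicator_def Int_def)
  have mean: "(\<Sum>u\<in>{..<n}. measure_pmf.prob ?M (E u)) = n * colour_weight r c i"
    unfolding E_def by (simp add: prob_colour)
  let ?deviation = "\<lambda>\<phi>. \<bar>(\<Sum>u\<in>{..<n}. indicator (E u) \<phi>) - (\<Sum>u\<in>{..<n}. measure_pmf.prob ?M (E u))\<bar>"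
  have "measure_pmf.prob ?M {\<phi>. (1 + \<epsilon>) * c * n < card {u\<in>{..<n}. \<phi> u = i}}
      \<le> measure_pmf.prob ?M {\<phi>. \<epsilon> * c * n \<le> ?deviation \<phi>}"
  proof (rule prob_mono_on_set_pmf)
    fix \<phi> assume "\<phi> \<in> {\<phi>. (1 + \<epsilon>) * c * n < card {u\<in>{..<n}. \<phi> u = i}}"
    moreover have "n * colour_weight r c i \<le> n * c"
      using colour_weight_le by (intro mult_left_mono) auto
    ultimately show "\<phi> \<in> {\<phi>. \<epsilon> * c * n \<le> ?deviation \<phi>}"
      unfolding count mean by (simp add: algebra_simps)
  qed
  also have "\<dots> \<le> card ({(u, v). u = v} \<inter> {..<n} \<times> {..<n}) / (\<epsilon> * c * n)^2"
    using \<open>n > 0\<close> \<open>\<epsilon> > 0\<close> weight_pos prob_colour_pair prob_colour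
    by (intro prob_deviation_sum_indicators_le) (auto simp: E_def)
  also have "{(u, v). u = v} \<inter> {..<n} \<times> {..<n} = (\<lambda>u. (u, u)) ` {..<n}" by auto
  also have "card \<dots> = n" by (subst card_image) (auto simp: inj_on_def)
  also have "real n / (\<epsilon> * c * n)^2 = 1 / (\<epsilon>^2 * c^2 * n)"
    using \<open>n > 0\<close> by (simp add: power2_eq_square)
  finally show ?thesis .
qed

lemma prob_largest_monochromatic_component_le:
  assumes "n > 0" and "\<epsilon> > 0"
  shows "1 - real (r + 1) / (\<epsilon>^2 * c^2 * n) \<le>
    measure_pmf.prob (map_pmf (monochromatic_edges Hn) (random_colouring n r c))
      {X. largest_component_size n X \<le> (1 + \<epsilon>) * c * n}"
proof -
  let ?M = "random_colouring n r c"
  let ?good = "{\<phi>. largest_component_size n (monochromatic_edges Hn \<phi>) \<le> (1 + \<epsilon>) * c * n}"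
  define B where "B i = {\<phi>. (1 + \<epsilon>) * c * n < card {u\<in>{..<n}. \<phi> u = i}}" for i :: nat
  have "measure_pmf.prob ?M (UNIV - ?good) \<le> measure_pmf.prob ?M (\<Union>i\<le>r. B i)"
  proof (rule prob_mono_on_set_pmf)
    fix \<phi> assume "\<phi> \<in> set_pmf ?M" and "\<phi> \<in> UNIV - ?good"
    moreover obtain v where "v < n"
      and "largest_component_size n (monochromatic_edges Hn \<phi>) \<le> card {u\<in>{..<n}. \<phi> u = \<phi> v}"
      using largest_monochromatic_component_le_colour_class[OF \<open>n > 0\<close>] by blast
    ultimately show "\<phi> \<in> (\<Union>i\<le>r. B i)"
      using random_colouring_le unfolding B_def by fastforce
  qed
  also have "\<dots> \<le> (\<Sum>i\<le>r. measure_pmf.prob ?M (B i))"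
    by (rule measure_pmf.finite_measure_subadditive_finite) auto
  also have "\<dots> \<le> (\<Sum>i\<le>r. 1 / (\<epsilon>^2 * c^2 * n))"
    unfolding B_def by (intro sum_mono prob_colour_class_large_le assms)
  also have "\<dots> = real (r + 1) / (\<epsilon>^2 * c^2 * n)" by simp
  finally show ?thesis
    using measure_pmf.prob_compl[of ?good ?M] by (simp add: measure_map_pmf vimage_def)
qed

lemma largest_monochromatic_component_le_tendsto_1:
  assumes "\<epsilon> > 0"
  shows "(\<lambda>n. measure_pmf.prob (map_pmf (monochromatic_edges (H n)) (random_colouring n r c))
    {X. largest_component_size n X \<le> (1 + \<epsilon>) * c * n}) \<longlonglongrightarrow> 1"
proof (rule tendsto_sandwich[OF _ _ _ tendsto_const])
  show "eventually (\<lambda>n. 1 - real (r + 1) / (\<epsilon>^2 * c^2) * (1 / n) \<le>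
      measure_pmf.prob (map_pmf (monochromatic_edges (H n)) (random_colouring n r c))
        {X. largest_component_size n X \<le> (1 + \<epsilon>) * c * n}) sequentially"
    using eventually_gt_at_top[of 0]
    by eventually_elim (use prob_largest_monochromatic_component_le assms in simp)
  show "(\<lambda>n. 1 - real (r + 1) / (\<epsilon>^2 * c^2) * (1 / real n)) \<longlonglongrightarrow> 1"
    by real_asymp
qed simp

end

theorem theorem17:
  fixes r :: nat and p :: real
    and H :: "nat \<Rightarrow> nat set set" and q :: "nat \<Rightarrow> real"
  assumes "r \<ge> 1"
    and "1 / real (r + 1) < p" and "p \<le> 1 / real r"
    and "weakly_pseudorandom H q"
    and "(\<lambda>n. ln (real n) / real n) \<in> o(q)"
  defines "c \<equiv> (1 + sqrt ((real (r + 1) * p - 1) / real r)) / real (r + 1)"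
  shows
    "(\<forall>\<mu>. (\<forall>n. \<mu> n \<in> M1p (H n) p) \<longrightarrow>
        (\<forall>\<epsilon>>0. (\<lambda>n. measure_pmf.prob (\<mu> n)
            {X. real (largest_component_size n X) \<ge> (1 - \<epsilon>) * c * real n}) \<longlonglongrightarrow> 1))
     \<and>
     (\<exists>\<mu>. (\<forall>n. \<mu> n \<in> M1p (H n) p) \<and>
        (\<forall>\<epsilon>>0. (\<lambda>n. measure_pmf.prob (\<mu> n)
            {X. real (largest_component_size n X) \<le> (1 + \<epsilon>) * c * real n}) \<longlonglongrightarrow> 1))"
proof -
  note c = colour_collision_threshold[OF assms(1-3), folded c_def]
  interpret colour_weights r c using c(1,2) by unfold_locales simp_all
  define \<mu> where "\<mu> n = map_pmf (monochromatic_edges (H n)) (random_colouring n r c)" for n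
  have "\<And>n. simple_graph_on n (H n)" using assms(4) unfolding weakly_pseudorandom_def by simp
  then have "\<forall>n. \<mu> n \<in> M1p (H n) p" unfolding \<mu>_def using monochromatic_edges_in_M1p c(3) by simp
  moreover have "\<forall>\<epsilon>>0. (\<lambda>n. measure_pmf.prob (\<mu> n)
      {X. real (largest_component_size n X) \<le> (1 + \<epsilon>) * c * real n}) \<longlonglongrightarrow> 1"
    unfolding \<mu>_def using largest_monochromatic_component_le_tendsto_1 by blast
  moreover have "(\<lambda>n. measure_pmf.prob (\<mu>' n)
      {X. (1 - \<epsilon>) * c * real n \<le> real (largest_component_size n X)}) \<longlonglongrightarrow> 1"
    if "\<forall>n. \<mu>' n \<in> M1p (H n) p" and "\<epsilon> > 0" for \<mu>' \<epsilon>
    using M1p_largest_component_ge_tendsto_1[OF assms(1,4,5) _ c] that by blast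
  ultimately show ?thesis by blast
qed

end
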